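(* Let $F$ be an infinite field (e.g. $\mathbb{R}$ or $\mathbb{C}$), let $V$ be a vector space over $F$, and let $n \ge 1$. Every valid widget with $n$ pairs in $V$ contains a legal subwidget.
   Context: A widget with $n$ pairs in $V$ is an indexed family of $n$ pairs of vectors $p_i=(p_i^+,p_i^-)$, $i=1,\dots,n$, in $V$ (the vectors $p_i^+,p_i^-$ are called the points of the pair $p_i$; each is called the opposite of the other). A section of a widget is a set of points containing at most one point from each pair. A widget with $n$ pairs is legal if every section spans a linear subspace of $V$ of dimension at most $n-1$. A widget with $n$ pairs is full if the linear span of all its $2n$ points has dimension at least $n$. A widget is valid if it is both legal and full. A subwidget of a widget with $n$ pairs is the widget formed by some $k$ of its pairs with $1\le k<n$ (a proper subset of the pairs); it is itself a widget with $k$ pairs, so it is legal if every one of its sections spans a subspace of dimension at most $k-1$, and full if its $2k$ points span a subspace of dimension at least $k$. *)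

theory Defs
  imports Complex_Main
begin

text \<open>A widget is a family p of pairs (p i = (p_i^+, p_i^-)) indexed by a finite index set I
  (for the whole widget I = {1..n}; a subwidget uses a nonempty proper subset of the indices).\<close>

definition widget_sections :: "(nat \<Rightarrow> 'b \<times> 'b) \<Rightarrow> nat set \<Rightarrow> 'b set set" where
  "widget_sections p I =
     {(\<lambda>i. if c i then fst (p i) else snd (p i)) ` S | S c. S \<subseteq> I}"

definition widget_legal :: "('a::field \<Rightarrow> 'b::ab_group_add \<Rightarrow> 'b) \<Rightarrow> (nat \<Rightarrow> 'b \<times> 'b) \<Rightarrow> nat set \<Rightarrow> bool" where
  "widget_legal scale p I \<longleftrightarrow>
     (\<forall>X \<in> widget_sections p I. vector_space.dim scale X \<le> card I - 1)"

definition widget_full :: "('a::field \<Rightarrow> 'b::ab_group_add \<Rightarrow> 'b) \<Rightarrow> (nat \<Rightarrow> 'b \<times> 'b) \<Rightarrow> nat set \<Rightarrow> bool" where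
  "widget_full scale p I \<longleftrightarrow>
     vector_space.dim scale (\<Union>i\<in>I. {fst (p i), snd (p i)}) \<ge> card I"

definition widget_valid :: "('a::field \<Rightarrow> 'b::ab_group_add \<Rightarrow> 'b) \<Rightarrow> (nat \<Rightarrow> 'b \<times> 'b) \<Rightarrow> nat set \<Rightarrow> bool" where
  "widget_valid scale p I \<longleftrightarrow> widget_legal scale p I \<and> widget_full scale p I"

end

theory Submission
  imports Defs
begin

text \<open>Suppose no proper subwidget is legal. Then every nonempty proper family of pairs has a
  section, hence a point set, of dimension at least its size, and fullness gives the same for
  the whole widget: the pairs satisfy Rado's condition for the linear matroid. Rado's theorem
  (by Rado's argument: one of any two points of a set can be discarded while preserving the
  condition, by submodularity of dimension) yields a section of the whole widget of
  dimension at least n, contradicting legality.\<close>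

definition rado_condition ::
    "('a::field \<Rightarrow> 'b::ab_group_add \<Rightarrow> 'b) \<Rightarrow> ('i \<Rightarrow> 'b set) \<Rightarrow> 'i set \<Rightarrow> bool" where
  "rado_condition scale A I \<longleftrightarrow> (\<forall>J \<subseteq> I. card J \<le> vector_space.dim scale (\<Union>(A ` J)))"

context vector_space
begin

lemma dim_subset_finite:
  assumes "finite T" "S \<subseteq> T"
  shows "dim S \<le> dim T"
proof -
  obtain B where B: "B \<subseteq> T" "independent B" "T \<subseteq> span B" "card B = dim T"
    by (rule basis_exists)
  have "S \<subseteq> span B" using assms(2) B(3) by blast
  then show ?thesis using dim_le_card B(1,4) finite_subset[OF B(1) assms(1)] by metis
qed

lemma dim_Un_Int_le:
  assumes "finite A" "finite B"
  shows "dim (A \<union> B) + dim (A \<inter> B) \<le> dim A + dim B"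
proof -
  obtain C where C: "C \<subseteq> A \<inter> B" "independent C" "card C = dim (A \<inter> B)"
    by (rule basis_exists)
  obtain D where D: "C \<subseteq> D" "D \<subseteq> A" "independent D" "A \<subseteq> span D"
    using maximal_independent_subset_extend[of C A] C by blast
  obtain E where E: "C \<subseteq> E" "E \<subseteq> B" "independent E" "B \<subseteq> span E"
    using maximal_independent_subset_extend[of C B] C by blast
  have fin: "finite D" "finite E"
    using finite_subset D(2) E(2) assms by auto
  have "A \<union> B \<subseteq> span (D \<union> E)"
    using D(4) E(4) span_mono[of D "D \<union> E"] span_mono[of E "D \<union> E"] by blast
  then have "dim (A \<union> B) \<le> card (D \<union> E)"
    using fin by (simp add: dim_le_card)
  moreover have "card C \<le> card (D \<inter> E)"
    using D(1) E(1) fin by (intro card_mono) auto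
  moreover have "card (D \<union> E) + card (D \<inter> E) = card D + card E"
    using card_Un_Int[OF fin] by simp
  ultimately show ?thesis
    using C(3) basis_card_eq_dim[OF D(2,4,3)] basis_card_eq_dim[OF E(2,4,3)] by linarith
qed

lemma rado_condition_remove_point:
  assumes I: "finite I" and fin: "\<forall>i\<in>I. finite (A i)" and rado: "rado_condition scale A I"
    and i: "i \<in> I" and xy: "x \<noteq> y"
  shows "rado_condition scale (A(i := A i - {x})) I \<or> rado_condition scale (A(i := A i - {y})) I"
proof (rule ccontr)
  define A1 where "A1 = A(i := A i - {x})"
  define A2 where "A2 = A(i := A i - {y})"
  assume "\<not> ?thesis"
  then obtain J1 J2 where J1: "J1 \<subseteq> I" "dim (\<Union>(A1 ` J1)) < card J1"
    and J2: "J2 \<subseteq> I" "dim (\<Union>(A2 ` J2)) < card J2"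
    unfolding rado_condition_def A1_def A2_def by (meson not_le)
  define U1 where "U1 = \<Union>(A1 ` J1)"
  define U2 where "U2 = \<Union>(A2 ` J2)"
  have finJ: "finite J1" "finite J2" using J1(1) J2(1) I finite_subset by auto
  have finU: "finite U1" "finite U2"
    using finJ J1(1) J2(1) fin unfolding U1_def U2_def A1_def A2_def by auto
  have rado_sub: "card J \<le> dim (\<Union>(A ` J))" if "J \<subseteq> I" for J
    using rado that unfolding rado_condition_def by blast
  have "i \<in> J1"
  proof (rule ccontr)
    assume "i \<notin> J1"
    then have "\<Union>(A1 ` J1) = \<Union>(A ` J1)" unfolding A1_def by auto
    then show False using J1 rado_sub[OF J1(1)] by simp
  qed
  moreover have "i \<in> J2"
  proof (rule ccontr)
    assume "i \<notin> J2"
    then have "\<Union>(A2 ` J2) = \<Union>(A ` J2)" unfolding A2_def by auto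
    then show False using J2 rado_sub[OF J2(1)] by simp
  qed
  ultimately have i_both: "i \<in> J1 \<inter> J2" by blast
  \<comment> \<open>As x and y differ, every point of A i survives in A1 i or in A2 i.\<close>
  have "\<Union>(A ` (J1 \<union> J2)) \<subseteq> U1 \<union> U2"
    using i_both xy unfolding U1_def U2_def A1_def A2_def by fastforce
  then have "dim (\<Union>(A ` (J1 \<union> J2))) \<le> dim (U1 \<union> U2)"
    using finU by (intro dim_subset_finite) auto
  then have "card (J1 \<union> J2) \<le> dim (U1 \<union> U2)"
    using rado_sub[of "J1 \<union> J2"] J1(1) J2(1) by simp
  moreover have "\<Union>(A ` (J1 \<inter> J2 - {i})) \<subseteq> U1 \<inter> U2"
    unfolding U1_def U2_def A1_def A2_def by auto
  then have "dim (\<Union>(A ` (J1 \<inter> J2 - {i}))) \<le> dim (U1 \<inter> U2)"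
    using finU by (intro dim_subset_finite) auto
  then have "card (J1 \<inter> J2 - {i}) \<le> dim (U1 \<inter> U2)"
    using rado_sub[of "J1 \<inter> J2 - {i}"] J1(1) by (meson Diff_subset le_infI1 order_trans)
  moreover have "card (J1 \<union> J2) + card (J1 \<inter> J2) = card J1 + card J2"
    using card_Un_Int[OF finJ] by simp
  moreover have "card (J1 \<inter> J2 - {i}) + 1 = card (J1 \<inter> J2)"
    using i_both finJ card_Suc_Diff1[of "J1 \<inter> J2" i] by simp
  ultimately show False
    using dim_Un_Int_le[OF finU] J1(2) J2(2) unfolding U1_def U2_def by linarith
qed

theorem rado_transversal:
  fixes A :: "'i \<Rightarrow> 'b set"
  assumes "finite I" "\<forall>i\<in>I. finite (A i)" "rado_condition scale A I"
  shows "\<exists>f :: 'i \<Rightarrow> 'b. (\<forall>i\<in>I. f i \<in> A i) \<and> card I \<le> dim (f ` I)"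
  using assms(2,3)
proof (induction "\<Sum>i\<in>I. card (A i)" arbitrary: A rule: less_induct)
  case less
  show ?case
  proof (cases "\<exists>i\<in>I. 2 \<le> card (A i)")
    case True
    then obtain i where i: "i \<in> I" "2 \<le> card (A i)" by blast
    then obtain x y where xy: "x \<in> A i" "y \<in> A i" "x \<noteq> y"
      using card_le_Suc0_iff_eq[of "A i"] less.prems(1) by fastforce
    obtain z where z: "z \<in> A i" and rado': "rado_condition scale (A(i := A i - {z})) I"
      using rado_condition_remove_point[OF assms(1) less.prems i(1) xy(3)] xy by blast
    define A' where "A' = A(i := A i - {z})"
    have "(\<Sum>j\<in>I. card (A' j)) < (\<Sum>j\<in>I. card (A j))"
      unfolding A'_def using assms(1) i z less.prems(1)
      by (intro sum_strict_mono_ex1) (auto simp: card_Diff1_less_iff)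
    moreover have "\<forall>j\<in>I. finite (A' j)"
      using less.prems(1) by (simp add: A'_def)
    ultimately obtain f where f: "\<forall>j\<in>I. f j \<in> A' j" "card I \<le> dim (f ` I)"
      using less.hyps rado' unfolding A'_def by blast
    have "\<forall>j\<in>I. f j \<in> A j"
      using f(1) by (auto simp: A'_def split: if_splits)
    then show ?thesis using f(2) by blast
  next
    case False
    have single: "A j = {the_elem (A j)}" if j: "j \<in> I" for j
    proof -
      have "card {j} \<le> dim (\<Union>(A ` {j}))"
        using less.prems(2) j unfolding rado_condition_def by blast
      then have "A j \<noteq> {}" using dim_le_card[of "{}" "{}"] by auto
      moreover have "card (A j) \<le> 1" using False j by auto
      ultimately have "card (A j) = 1"
        using less.prems(1) j by (simp add: Suc_leI card_gt_0_iff le_antisym)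
      then obtain x where "A j = {x}" by (auto simp: card_1_singleton_iff)
      then show ?thesis by simp
    qed
    have "card I \<le> dim (\<Union>(A ` I))"
      using less.prems(2) unfolding rado_condition_def by blast
    also have "\<Union>(A ` I) = (\<lambda>j. the_elem (A j)) ` I"
      using single by auto
    finally have "card I \<le> dim ((\<lambda>j. the_elem (A j)) ` I)" .
    moreover have "\<forall>j\<in>I. the_elem (A j) \<in> A j"
      using single by (metis singletonI)
    ultimately show ?thesis by (intro exI[of _ "\<lambda>j. the_elem (A j)"]) simp
  qed
qed

lemma widget_card_le_dim_points_if_not_legal:
  assumes "finite J" "\<not> widget_legal scale p J"
  shows "card J \<le> dim (\<Union>j\<in>J. {fst (p j), snd (p j)})"
proof -
  obtain X where X: "X \<in> widget_sections p J" "card J - 1 < dim X"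
    using assms(2) unfolding widget_legal_def by (auto simp: not_le)
  have "X \<subseteq> (\<Union>j\<in>J. {fst (p j), snd (p j)})"
    using X(1) unfolding widget_sections_def by auto
  then have "dim X \<le> dim (\<Union>j\<in>J. {fst (p j), snd (p j)})"
    using assms(1) by (intro dim_subset_finite) auto
  then show ?thesis using X(2) by linarith
qed

lemma rado_condition_widget_points_if_no_legal_subwidget:
  assumes "finite I" "widget_full scale p I"
    and no_legal: "\<And>J. J \<noteq> {} \<Longrightarrow> J \<subset> I \<Longrightarrow> \<not> widget_legal scale p J"
  shows "rado_condition scale (\<lambda>i. {fst (p i), snd (p i)}) I"
  unfolding rado_condition_def
proof (intro allI impI)
  fix J assume J: "J \<subseteq> I"
  then have "finite J" using assms(1) finite_subset by blast
  consider "J = {}" | "J = I" | "J \<noteq> {}" "J \<subset> I"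
    using J by blast
  then show "card J \<le> dim (\<Union>j\<in>J. {fst (p j), snd (p j)})"
  proof cases
    case 2
    then show ?thesis using assms(2) by (simp add: widget_full_def)
  next
    case 3
    then show ?thesis
      using no_legal \<open>finite J\<close> by (blast intro: widget_card_le_dim_points_if_not_legal)
  qed simp
qed

end

lemma transversal_in_widget_sections:
  assumes "\<forall>i\<in>I. f i \<in> {fst (p i), snd (p i)}"
  shows "f ` I \<in> widget_sections p I"
proof -
  have "f ` I = (\<lambda>i. if f i = fst (p i) then fst (p i) else snd (p i)) ` I"
    using assms by (intro image_cong) auto
  then show ?thesis
    unfolding widget_sections_def
    by (intro CollectI exI[of _ I] exI[of _ "\<lambda>i. f i = fst (p i)"]) simp
qed

theorem theorem1:
  fixes scale :: "'a::field \<Rightarrow> 'b::ab_group_add \<Rightarrow> 'b"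
    and p :: "nat \<Rightarrow> 'b \<times> 'b"
    and n :: nat
  assumes "infinite (UNIV :: 'a set)"
    and "vector_space scale"
    and "n \<ge> 1"
    and "widget_valid scale p {1..n}"
  shows "\<exists>J. J \<subseteq> {1..n} \<and> 1 \<le> card J \<and> card J < n \<and> widget_legal scale p J"
proof (rule ccontr)
  assume no_legal_subwidget: "\<not> ?thesis"
  interpret vector_space scale by fact
  have "\<not> widget_legal scale p J" if "J \<noteq> {}" "J \<subset> {1..n}" for J
    using no_legal_subwidget that psubset_card_mono[of "{1..n}" J] finite_subset[of J "{1..n}"]
    by (auto simp: Suc_le_eq card_gt_0_iff)
  then have "rado_condition scale (\<lambda>i. {fst (p i), snd (p i)}) {1..n}"
    using assms(4) unfolding widget_valid_def
    by (intro rado_condition_widget_points_if_no_legal_subwidget) auto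
  then have "\<exists>f. (\<forall>i\<in>{1..n}. f i \<in> {fst (p i), snd (p i)}) \<and> card {1..n} \<le> dim (f ` {1..n})"
    by (intro rado_transversal) auto
  then obtain f where f: "\<forall>i\<in>{1..n}. f i \<in> {fst (p i), snd (p i)}" "n \<le> dim (f ` {1..n})"
    by auto
  have "f ` {1..n} \<in> widget_sections p {1..n}"
    using f(1) by (rule transversal_in_widget_sections)
  then have "dim (f ` {1..n}) \<le> n - 1"
    using assms(4) by (simp add: widget_valid_def widget_legal_def)
  then show False using f(2) assms(3) by linarith
qed

end
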